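(* For all integers $r \geq 2$ and $k \geq 3$, we have $P_r(k) > (k-1) r$.
   Context: A colour pattern on a vertex set $V$ is a sequence $G_1,\dots,G_r$ of pairwise edge-disjoint graphs all having vertex set $V$; it is $K_{k+1}$-free if no $G_i$ contains $K_{k+1}$. Given a colour pattern $G_1,\dots,G_r$ on $V$ and a colouring $c: V \to [r]$, a strongly monochromatic $K_k$ is a set of $k$ vertices all receiving the same colour $i$ under $c$ and forming a clique in $G_i$. $P_r(k)$ is the smallest integer $n$ such that there exists a $K_{k+1}$-free colour pattern $G_1,\dots,G_r$ on an $n$-element vertex set $V$ such that every colouring $V \to [r]$ yields a strongly monochromatic $K_k$. *)

theory Defs
  imports Main
begin

definition graph_on :: "'a set \<Rightarrow> 'a set set \<Rightarrow> bool" where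
  "graph_on V E \<longleftrightarrow> (\<forall>e\<in>E. e \<subseteq> V \<and> card e = 2)"

definition clique_in :: "'a set set \<Rightarrow> 'a set \<Rightarrow> bool" where
  "clique_in E S \<longleftrightarrow> (\<forall>x\<in>S. \<forall>y\<in>S. x \<noteq> y \<longrightarrow> {x, y} \<in> E)"

definition colour_pattern :: "nat \<Rightarrow> 'a set \<Rightarrow> (nat \<Rightarrow> 'a set set) \<Rightarrow> bool" where
  "colour_pattern r V G \<longleftrightarrow>
     (\<forall>i\<in>{1..r}. graph_on V (G i)) \<and>
     (\<forall>i\<in>{1..r}. \<forall>j\<in>{1..r}. i \<noteq> j \<longrightarrow> G i \<inter> G j = {})"

definition pattern_clique_free :: "nat \<Rightarrow> nat \<Rightarrow> 'a set \<Rightarrow> (nat \<Rightarrow> 'a set set) \<Rightarrow> bool" where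
  "pattern_clique_free r m V G \<longleftrightarrow>
     (\<forall>i\<in>{1..r}. \<not> (\<exists>S. S \<subseteq> V \<and> card S = m \<and> clique_in (G i) S))"

definition strongly_mono_clique :: "nat \<Rightarrow> nat \<Rightarrow> 'a set \<Rightarrow> (nat \<Rightarrow> 'a set set) \<Rightarrow> ('a \<Rightarrow> nat) \<Rightarrow> bool" where
  "strongly_mono_clique r k V G c \<longleftrightarrow>
     (\<exists>S i. i \<in> {1..r} \<and> S \<subseteq> V \<and> card S = k \<and> (\<forall>v\<in>S. c v = i) \<and> clique_in (G i) S)"

definition P_witness :: "nat \<Rightarrow> nat \<Rightarrow> nat \<Rightarrow> bool" where
  "P_witness r k n \<longleftrightarrow>
     (\<exists>(V :: nat set) G. finite V \<and> card V = n \<and> colour_pattern r V G \<and>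
        pattern_clique_free r (k + 1) V G \<and>
        (\<forall>c. (\<forall>v\<in>V. c v \<in> {1..r}) \<longrightarrow> strongly_mono_clique r k V G c))"

definition P :: "nat \<Rightarrow> nat \<Rightarrow> nat" where
  "P r k = (LEAST n. P_witness r k n)"

end

theory Submission
  imports Defs
begin

text \<open>Split V evenly into r colour classes of size at most k - 1 each whenever
  |V| \<le> (k - 1) r. Such a colouring has no monochromatic k-set at all, so no
  colour pattern on V forces a strongly monochromatic K_k.\<close>

lemma div_eq_imp_in_block:
  fixes x m j :: nat
  assumes "m > 0" and "x div m = j"
  shows "x \<in> {j * m ..< j * m + m}"
proof -
  have "x = j * m + x mod m" using assms(2) div_mult_mod_eq[of x m] by simp
  moreover have "x mod m < m" using assms(1) by simp
  ultimately show ?thesis by (metis atLeastLessThan_iff le_add1 add_less_cancel_left)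
qed

lemma exists_colouring_small_classes:
  fixes V :: "'a set" and m r :: nat
  assumes "finite V" and "card V \<le> m * r"
  shows "\<exists>c. (\<forall>v\<in>V. c v \<in> {1..r}) \<and> (\<forall>i. card {v\<in>V. c v = i} \<le> m)"
proof (cases "m = 0")
  case True
  with assms have "V = {}" by simp
  then show ?thesis by simp
next
  case False
  obtain f where f: "bij_betw f V {0..<card V}"
    using ex_bij_betw_finite_nat[OF assms(1)] by blast
  define c where "c v = f v div m + 1" for v
  have "c v \<in> {1..r}" if "v \<in> V" for v
  proof -
    have "f v < card V" using f that by (auto simp: bij_betw_def)
    with assms(2) have "f v < m * r" by linarith
    then have "f v div m < r" by (simp add: less_mult_imp_div_less mult.commute)
    then show ?thesis by (simp add: c_def)
  qed
  moreover have "card {v\<in>V. c v = i} \<le> m" for i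
  proof -
    have "inj_on f {v\<in>V. c v = i}"
      using f by (auto simp: bij_betw_def intro: inj_on_subset)
    moreover have "f ` {v\<in>V. c v = i} \<subseteq> {(i - 1) * m ..< (i - 1) * m + m}"
    proof
      fix x assume "x \<in> f ` {v\<in>V. c v = i}"
      then obtain v where "x = f v" "c v = i" by blast
      then have "x div m = i - 1" by (simp add: c_def)
      then show "x \<in> {(i - 1) * m ..< (i - 1) * m + m}"
        using div_eq_imp_in_block False by blast
    qed
    then have "card (f ` {v\<in>V. c v = i}) \<le> m"
      by (metis card_atLeastLessThan card_mono finite_atLeastLessThan add_diff_cancel_left')
    ultimately show ?thesis by (simp add: card_image)
  qed
  ultimately show ?thesis by blast
qed

theorem lemma3p1:
  fixes r k n :: nat
  assumes "r \<ge> 2" and "k \<ge> 3"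
  assumes "P_witness r k n"
  shows "(k - 1) * r < n"
proof (rule ccontr)
  assume "\<not> (k - 1) * r < n"
  obtain V :: "nat set" and G where V: "finite V" "card V = n"
    and forcing: "\<forall>c. (\<forall>v\<in>V. c v \<in> {1..r}) \<longrightarrow> strongly_mono_clique r k V G c"
    using assms(3) unfolding P_witness_def by blast
  obtain c where c: "\<forall>v\<in>V. c v \<in> {1..r}" and small: "\<forall>i. card {v\<in>V. c v = i} \<le> k - 1"
    using exists_colouring_small_classes[of V "k - 1" r] V \<open>\<not> (k - 1) * r < n\<close> by auto
  have "strongly_mono_clique r k V G c" using forcing c by blast
  then obtain S i where "S \<subseteq> V" "\<forall>v\<in>S. c v = i" "card S = k"
    unfolding strongly_mono_clique_def by blast
  then have S: "S \<subseteq> {v\<in>V. c v = i}" "card S = k" by auto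
  have "k \<le> card {v\<in>V. c v = i}"
    using S card_mono[OF _ S(1)] V(1) by simp
  moreover have "card {v\<in>V. c v = i} \<le> k - 1" using small by blast
  ultimately show False using assms(2) by linarith
qed

end
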